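(* Let $1\le l\le r$ and write $I^{[l]}(z)=\sum_{d}I^{[l]}_{d_1,\dots,d_n}z_1^{d_1}\cdots z_n^{d_n}$ with $I^{[l]}_{d_1,\dots,d_n}\in\mathbb{F}_p^n$, the sum over $(d_1,\dots,d_n)\in\mathbb{Z}_{\ge0}^n$. Put $\delta_l=\sum_{j=1}^nM_j-lp$. Then $I^{[l]}_{d_1,\dots,d_n}\ne0$ if and only if $\sum_id_i=\delta_l$ and $d_i\le M_i$ for all $i$; moreover $$I^{[l]}_{d_1,\dots,d_n}=(-1)^{\delta_l}\prod_{j=1}^n\binom{M_j}{d_j}\Big(1-\frac{d_1}{M_1},\dots,1-\frac{d_n}{M_n}\Big),$$ and, writing $I^{[l]}_{d_1,\dots,d_n}=(I_{d;1},\dots,I_{d;n})$, we have $\sum_im_iI_{d;i}=\sum_iM_iI_{d;i}=0$ in $\mathbb{F}_p$.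
   Context: $p,q$ are primes, $n$ a positive integer with $p>n\ge2$, $p>q$; $m_1,\dots,m_n$ are positive integers $<q$, and $M_i$ is the least positive integer with $M_i\equiv -m_iq^{-1}\pmod p$ (in formulas over $\mathbb{F}_p$ its residue). With $\Phi_p(x,z)=\prod_i(x-z_i)^{M_i}$, $I^{[l]}(z)\in\mathbb{F}_p[z_1,\dots,z_n]^n$ is the coefficient of $x^{lp-1}$ in $(\Phi_p/(x-z_1),\dots,\Phi_p/(x-z_n))$, and $r=\lfloor\sum_iM_i/p\rfloor$. *)

theory Defs
  imports "HOL-Library.Poly_Mapping" "HOL-Computational_Algebra.Polynomial"
          "HOL-Number_Theory.Number_Theory" "Berlekamp_Zassenhaus.Finite_Field"
begin

text \<open>Multivariate polynomials over a ring R in variables z_0, z_1, ... :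
  finitely supported maps from monomials (exponent vectors) to coefficients.\<close>
type_synonym 'a mpoly = "(nat \<Rightarrow>\<^sub>0 nat) \<Rightarrow>\<^sub>0 'a"

definition zvar :: "nat \<Rightarrow> 'a::comm_ring_1 mpoly" where
  "zvar i = Poly_Mapping.single (Poly_Mapping.single i 1) 1"

definition Mexp :: "'p::prime_card itself \<Rightarrow> nat \<Rightarrow> nat \<Rightarrow> nat" where
  "Mexp _ q m = (LEAST M. 0 < M \<and>
      (of_nat M :: 'p mod_ring) = - (of_nat m) * inverse (of_nat q))"

definition xlin :: "nat \<Rightarrow> 'a::comm_ring_1 mpoly poly" where
  "xlin i = [: - zvar i, 1 :]"

definition Phi :: "nat \<Rightarrow> (nat \<Rightarrow> nat) \<Rightarrow> 'a::comm_ring_1 mpoly poly" where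
  "Phi n M = (\<Prod>j<n. xlin j ^ M j)"

text \<open>Phi_p/(x - z_i), written out as the exact quotient (M_i \<ge> 1).\<close>
definition Phi_div :: "nat \<Rightarrow> (nat \<Rightarrow> nat) \<Rightarrow> nat \<Rightarrow> 'a::comm_ring_1 mpoly poly" where
  "Phi_div n M i = xlin i ^ (M i - 1) * (\<Prod>j\<in>{..<n} - {i}. xlin j ^ M j)"

text \<open>i-th component of I^[l](z): coefficient of x^(l p - 1) in Phi_p/(x - z_i).\<close>
definition Icomp :: "nat \<Rightarrow> (nat \<Rightarrow> nat) \<Rightarrow> nat \<Rightarrow> nat \<Rightarrow> nat \<Rightarrow> 'a::comm_ring_1 mpoly" where
  "Icomp n M p l i = coeff (Phi_div n M i) (l * p - 1)"

end

theory Submission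
  imports Defs
begin

(* Expanding every factor binomially, the coefficient of x^(lp-1) z^d in
   Phi/(x - z_i) = prod_j (x - z_j)^(M_j - [j = i]) is the single term
   (-1)^|d| prod_j C(M_j - [j = i], d_j), present exactly when d_j <= M_j - [j = i] and
   |d| = sum_j M_j - lp; the identity C(M - 1, k) = C(M, k) (1 - k/M) turns it into the closed form.
   As all M_j < p, the binomials C(M_j, d_j) are units of F_p, and 1 - d_i/M_i is a unit for any i
   with d_i < M_i, which exists because |d| < sum_j M_j.
   The linear relations come from the x-derivative: sum_i M_i Phi/(x - z_i) = dPhi/dx, whose
   coefficient of x^(lp-1) is lp times a coefficient of Phi, hence 0 in F_p; and m_i = -q M_i in F_p. *)

lemma lookup_of_nat_mult:
  "Poly_Mapping.lookup (of_nat c * f :: 'k::comm_monoid_add \<Rightarrow>\<^sub>0 'a::comm_semiring_1) m =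
    of_nat c * Poly_Mapping.lookup f m"
  by (induction c) (simp_all add: lookup_add distrib_right)

lemma neg_zvar_power:
  "(- zvar j :: 'a::comm_ring_1 mpoly) ^ t = Poly_Mapping.single (Poly_Mapping.single j t) ((-1) ^ t)"
  by (induction t) (simp_all add: zvar_def single_uminus[symmetric] mult_single single_add[symmetric])

lemma xlin_power:
  "(xlin j :: 'a::comm_ring_1 mpoly poly) ^ e =
     (\<Sum>t\<le>e. monom (Poly_Mapping.single (Poly_Mapping.single j t) (of_nat (e choose t) * (-1) ^ t)) (e - t))"
proof -
  have "xlin j = monom (- zvar j) 0 + (monom 1 1 :: 'a mpoly poly)"
    by (simp add: xlin_def monom_altdef)
  then show ?thesis
    by (simp add: binomial_ring monom_power mult_monom of_nat_monom neg_zvar_power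
        of_nat_single mult_single del: single_of_nat)
qed

lemma prod_monom_single:
  "finite S \<Longrightarrow> (\<Prod>j\<in>S. monom (Poly_Mapping.single (a j) (c j)) (k j)) =
    (monom (Poly_Mapping.single (\<Sum>j\<in>S. a j) (\<Prod>j\<in>S. c j)) (\<Sum>j\<in>S. k j)
      :: ('k::comm_monoid_add \<Rightarrow>\<^sub>0 'a::comm_semiring_1) poly)"
  by (induction S rule: finite_induct) (simp_all add: mult_monom mult_single)

lemma prod_xlin_power_expansion:
  assumes "finite S"
  shows "(\<Prod>j\<in>S. xlin j ^ E j :: 'a::comm_ring_1 mpoly poly) =
    (\<Sum>g\<in>PiE S (\<lambda>j. {..E j}). monom (Poly_Mapping.single (\<Sum>j\<in>S. Poly_Mapping.single j (g j))
       (\<Prod>j\<in>S. of_nat (E j choose g j) * (-1) ^ g j)) (\<Sum>j\<in>S. E j - g j))"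
  by (simp add: xlin_power prod_sum_PiE prod_monom_single assms)

lemma lookup_coeff_prod_xlin_power:
  assumes "finite S" and "Poly_Mapping.keys d \<subseteq> S"
  shows "Poly_Mapping.lookup (coeff (\<Prod>j\<in>S. xlin j ^ E j :: 'a::comm_ring_1 mpoly poly) k) d =
    (if (\<forall>j\<in>S. Poly_Mapping.lookup d j \<le> E j) \<and> (\<Sum>j\<in>S. Poly_Mapping.lookup d j) + k = (\<Sum>j\<in>S. E j)
     then (-1) ^ (\<Sum>j\<in>S. Poly_Mapping.lookup d j) * (\<Prod>j\<in>S. of_nat (E j choose Poly_Mapping.lookup d j))
     else 0)"
proof -
  let ?d = "Poly_Mapping.lookup d"
  define D where "D = restrict ?d S"
  define c where "c g = (\<Prod>j\<in>S. of_nat (E j choose g j) * (-1) ^ g j :: 'a)" for g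
  have monomial_eq_iff: "(\<Sum>j\<in>S. Poly_Mapping.single j (g j)) = d \<longleftrightarrow> g = D"
    if "g \<in> extensional S" for g
    using that assms
    by (auto simp: D_def poly_mapping_eq_iff fun_eq_iff lookup_sum lookup_single when_def
        extensional_def in_keys_iff)
  have "Poly_Mapping.lookup (coeff (\<Prod>j\<in>S. xlin j ^ E j :: 'a mpoly poly) k) d =
      (\<Sum>g\<in>PiE S (\<lambda>j. {..E j}). if g = D then (if (\<Sum>j\<in>S. E j - g j) = k then c g else 0) else 0)"
    unfolding prod_xlin_power_expansion[OF assms(1)] c_def[symmetric]
    by (auto simp: coeff_sum lookup_sum lookup_single when_def PiE_def monomial_eq_iff intro!: sum.cong)
  also have "\<dots> = (if D \<in> PiE S (\<lambda>j. {..E j}) \<and> (\<Sum>j\<in>S. E j - D j) = k then c D else 0)"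
    by (simp add: sum.delta finite_PiE assms(1))
  also have "\<dots> = (if (\<forall>j\<in>S. ?d j \<le> E j) \<and> (\<Sum>j\<in>S. ?d j) + k = (\<Sum>j\<in>S. E j)
     then (-1) ^ (\<Sum>j\<in>S. ?d j) * (\<Prod>j\<in>S. of_nat (E j choose ?d j)) else 0)"
  proof -
    have "D \<in> PiE S (\<lambda>j. {..E j}) \<longleftrightarrow> (\<forall>j\<in>S. ?d j \<le> E j)"
      by (auto simp: D_def restrict_PiE_iff)
    moreover have "(\<Sum>j\<in>S. E j - D j) = k \<longleftrightarrow> (\<Sum>j\<in>S. ?d j) + k = (\<Sum>j\<in>S. E j)"
      if "\<forall>j\<in>S. ?d j \<le> E j"
      using that sum_mono[of S ?d E] by (simp add: D_def sum_subtractf_nat) linarith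
    moreover have "c D = (-1) ^ (\<Sum>j\<in>S. ?d j) * (\<Prod>j\<in>S. of_nat (E j choose ?d j))"
      by (simp add: c_def D_def prod.distrib power_sum)
    ultimately show ?thesis
      by auto
  qed
  finally show ?thesis .
qed

lemma Phi_div_eq_prod:
  assumes "i < n"
  shows "Phi_div n M i = (\<Prod>j<n. xlin j ^ (M(i := M i - 1)) j)"
proof -
  have "(\<Prod>j\<in>{..<n} - {i}. xlin j ^ (M(i := M i - 1)) j) = (\<Prod>j\<in>{..<n} - {i}. xlin j ^ M j)"
    by (rule prod.cong) auto
  then show ?thesis
    using assms by (simp add: Phi_div_def prod.remove[of "{..<n}" i])
qed

lemma pderiv_Phi:
  "pderiv (Phi n M :: 'a::idom mpoly poly) = (\<Sum>i<n. smult (of_nat (M i)) (Phi_div n M i))"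
  unfolding Phi_def Phi_div_def pderiv_prod
  by (intro sum.cong) (simp_all add: pderiv_power xlin_def pderiv_pCons mult_ac)

lemma sum_of_nat_mult_lookup_Icomp:
  assumes "0 < l * p"
  shows "(\<Sum>i<n. of_nat (M i) * Poly_Mapping.lookup (Icomp n M p l i :: 'a::idom mpoly) d) =
    of_nat (l * p) * Poly_Mapping.lookup (coeff (Phi n M) (l * p)) d"
proof -
  have "(\<Sum>i<n. of_nat (M i) * Poly_Mapping.lookup (Icomp n M p l i :: 'a mpoly) d) =
      Poly_Mapping.lookup (coeff (pderiv (Phi n M)) (l * p - 1)) d"
    by (simp add: pderiv_Phi coeff_sum lookup_sum Icomp_def lookup_of_nat_mult)
  also have "\<dots> = of_nat (l * p) * Poly_Mapping.lookup (coeff (Phi n M) (l * p)) d"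
    using assms by (simp add: coeff_pderiv lookup_of_nat_mult del: of_nat_mult)
  finally show ?thesis .
qed

lemma of_nat_pred_choose:
  assumes "(of_nat M :: 'a::field) \<noteq> 0" and "k \<le> M"
  shows "(of_nat (M - 1 choose k) :: 'a) = of_nat (M choose k) * (1 - of_nat k / of_nat M)"
proof -
  have "(of_nat M - of_nat k) * of_nat (M choose k) = (of_nat M * of_nat (M - 1 choose k) :: 'a)"
    using binomial_absorb_comp[of M k] assms(2) by (metis of_nat_diff of_nat_mult)
  then show ?thesis
    using assms(1) by (simp add: field_simps)
qed

lemma exponent_condition_fun_upd_pred_iff:
  fixes M k :: "nat \<Rightarrow> nat"
  assumes "i < n" and "0 < M i" and "0 < L" and "L \<le> (\<Sum>j<n. M j)"
  shows "(\<forall>j\<in>{..<n}. k j \<le> (M(i := M i - 1)) j) \<and>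
      (\<Sum>j<n. k j) + (L - 1) = (\<Sum>j<n. (M(i := M i - 1)) j)
    \<longleftrightarrow> ((\<Sum>j<n. k j) = (\<Sum>j<n. M j) - L \<and> (\<forall>j<n. k j \<le> M j)) \<and> k i < M i"
proof -
  define E where "E = M(i := M i - 1)"
  have E_i: "E i = M i - 1" and E_off_i: "\<And>j. j \<in> {..<n} - {i} \<Longrightarrow> E j = M j"
    by (simp_all add: E_def)
  have "(\<Sum>j\<in>{..<n} - {i}. E j) = (\<Sum>j\<in>{..<n} - {i}. M j)"
    using E_off_i by (intro sum.cong) auto
  then have sum_E: "(\<Sum>j<n. E j) + 1 = (\<Sum>j<n. M j)"
    using assms(1,2) by (simp add: E_i sum.remove[of "{..<n}" i])
  have le_E_iff: "(\<forall>j<n. k j \<le> E j) \<longleftrightarrow> (\<forall>j<n. k j \<le> M j) \<and> k i < M i"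
  proof
    assume le: "\<forall>j<n. k j \<le> E j"
    then have "k i < M i"
      using assms(1,2) E_i by force
    moreover have "k j \<le> M j" if "j < n" for j
      using le that by (metis E_def diff_le_self dual_order.trans fun_upd_apply)
    ultimately show "(\<forall>j<n. k j \<le> M j) \<and> k i < M i"
      by blast
  qed (auto simp: E_def)
  show ?thesis
    using le_E_iff sum_E assms(3,4) unfolding E_def[symmetric] by auto
qed

lemma prod_of_nat_choose_fun_upd_pred:
  fixes M k :: "nat \<Rightarrow> nat"
  assumes "i < n" and "(of_nat (M i) :: 'a::field) \<noteq> 0" and "k i \<le> M i"
  shows "(\<Prod>j<n. of_nat ((M(i := M i - 1)) j choose k j) :: 'a) =
    (\<Prod>j<n. of_nat (M j choose k j)) * (1 - of_nat (k i) / of_nat (M i))"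
proof -
  let ?f = "\<lambda>j. of_nat ((M(i := M i - 1)) j choose k j) :: 'a"
  let ?g = "\<lambda>j. of_nat (M j choose k j) :: 'a"
  have "prod ?f {..<n} = ?f i * prod ?f ({..<n} - {i})"
    by (rule prod.remove) (use assms(1) in auto)
  moreover have "prod ?g {..<n} = ?g i * prod ?g ({..<n} - {i})"
    by (rule prod.remove) (use assms(1) in auto)
  moreover have "prod ?f ({..<n} - {i}) = prod ?g ({..<n} - {i})"
    by (intro prod.cong) auto
  ultimately show ?thesis
    using of_nat_pred_choose[OF assms(2,3)] by (simp add: mult_ac)
qed

lemma lookup_Icomp:
  fixes M :: "nat \<Rightarrow> nat" and d :: "nat \<Rightarrow>\<^sub>0 nat"
  assumes "i < n" and "Poly_Mapping.keys d \<subseteq> {..<n}" and "(of_nat (M i) :: 'a::field) \<noteq> 0"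
    and "0 < l * p" and "l * p \<le> (\<Sum>j<n. M j)"
  shows "Poly_Mapping.lookup (Icomp n M p l i :: 'a mpoly) d =
    (if (\<Sum>j<n. Poly_Mapping.lookup d j) = (\<Sum>j<n. M j) - l * p \<and> (\<forall>j<n. Poly_Mapping.lookup d j \<le> M j)
     then (-1) ^ ((\<Sum>j<n. M j) - l * p) * (\<Prod>j<n. of_nat (M j choose Poly_Mapping.lookup d j))
       * (1 - of_nat (Poly_Mapping.lookup d i) / of_nat (M i))
     else 0)"
proof -
  let ?d = "Poly_Mapping.lookup d"
  let ?C = "(\<Sum>j<n. ?d j) = (\<Sum>j<n. M j) - l * p \<and> (\<forall>j<n. ?d j \<le> M j)"
  define E where "E = M(i := M i - 1)"
  have "0 < M i"
    using assms(3) by (cases "M i") auto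
  have "Icomp n M p l i = (coeff (\<Prod>j<n. xlin j ^ E j) (l * p - 1) :: 'a mpoly)"
    by (simp add: Icomp_def Phi_div_eq_prod[OF assms(1)] E_def)
  then have "Poly_Mapping.lookup (Icomp n M p l i :: 'a mpoly) d =
    (if ?C \<and> ?d i < M i then (-1) ^ (\<Sum>j<n. ?d j) * (\<Prod>j<n. of_nat (E j choose ?d j)) else 0)"
    using lookup_coeff_prod_xlin_power[OF finite_lessThan assms(2), of E "l * p - 1"]
      exponent_condition_fun_upd_pred_iff[OF assms(1) \<open>0 < M i\<close> assms(4,5), of ?d]
    unfolding E_def by (simp only:)
  moreover have "?d i = M i" if ?C and "\<not> ?d i < M i"
    using that assms(1) by (simp add: le_antisym)
  ultimately show ?thesis
    using prod_of_nat_choose_fun_upd_pred[where i = i and n = n and M = M and k = ?d, OF assms(1,3)] assms(3)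
    unfolding E_def by auto
qed

lemma of_nat_neq_0_below_char:
  assumes "0 < c" and "c < CHAR('a::semiring_1)"
  shows "(of_nat c :: 'a) \<noteq> 0"
  using assms by (simp add: of_nat_eq_0_iff_char_dvd nat_dvd_not_less)

lemma of_nat_choose_neq_0_below_char:
  assumes "prime CHAR('a::semiring_1)" and "M < CHAR('a)" and "k \<le> M"
  shows "(of_nat (M choose k) :: 'a) \<noteq> 0"
proof
  assume "(of_nat (M choose k) :: 'a) = 0"
  then have "CHAR('a) dvd M choose k"
    by (simp add: of_nat_eq_0_iff_char_dvd)
  then have "CHAR('a) dvd fact M"
    using binomial_fact_lemma[OF assms(3)] by (metis dvd_mult)
  then show False
    using assms(1,2) by (simp add: prime_dvd_fact_iff)
qed

lemma ex_lookup_Icomp_neq_0_iff: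
  fixes M :: "nat \<Rightarrow> nat" and d :: "nat \<Rightarrow>\<^sub>0 nat"
  assumes "prime CHAR('a::field)" and "\<forall>j<n. 0 < M j \<and> M j < CHAR('a)"
    and "Poly_Mapping.keys d \<subseteq> {..<n}" and "0 < l * p" and "l * p \<le> (\<Sum>j<n. M j)"
  shows "(\<exists>i<n. Poly_Mapping.lookup (Icomp n M p l i :: 'a mpoly) d \<noteq> 0) \<longleftrightarrow>
    (\<Sum>j<n. Poly_Mapping.lookup d j) = (\<Sum>j<n. M j) - l * p \<and> (\<forall>j<n. Poly_Mapping.lookup d j \<le> M j)"
    (is "_ \<longleftrightarrow> ?C")
proof -
  let ?d = "Poly_Mapping.lookup d"
  have M_neq_0: "(of_nat (M i) :: 'a) \<noteq> 0" if "i < n" for i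
    by (rule of_nat_neq_0_below_char) (use that assms(2) in auto)
  have "\<exists>i<n. Poly_Mapping.lookup (Icomp n M p l i :: 'a mpoly) d \<noteq> 0" if ?C
  proof -
    obtain i where i: "i < n" "?d i < M i"
    proof (rule ccontr)
      assume "\<not> thesis"
      with that \<open>?C\<close> have "(\<Sum>j<n. ?d j) = (\<Sum>j<n. M j)"
        by (intro sum.cong refl) (metis lessThan_iff le_neq_implies_less)
      with \<open>?C\<close> assms(4,5) show False
        by linarith
    qed
    have "(of_nat (M j choose ?d j) :: 'a) \<noteq> 0" if "j < n" for j
      using that \<open>?C\<close> assms(1,2) of_nat_choose_neq_0_below_char by blast
    then have "(\<Prod>j<n. of_nat (M j choose ?d j) :: 'a) \<noteq> 0"
      by (simp add: prod_zero_iff)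
    moreover have "(of_nat (M i - ?d i) :: 'a) \<noteq> 0"
      by (rule of_nat_neq_0_below_char) (use i assms(2) in force)+
    then have "1 - of_nat (?d i) / of_nat (M i) \<noteq> (0 :: 'a)"
      using i M_neq_0 by (simp add: of_nat_diff field_simps)
    ultimately show ?thesis
      using i(1) lookup_Icomp[OF i(1) assms(3) M_neq_0 assms(4,5)] \<open>?C\<close> by auto
  qed
  moreover have "Poly_Mapping.lookup (Icomp n M p l i :: 'a mpoly) d = 0" if "\<not> ?C" and "i < n" for i
    using lookup_Icomp[OF that(2) assms(3) M_neq_0[OF that(2)] assms(4,5)] that(1) by simp
  ultimately show ?thesis
    by blast
qed

lemma Mexp_range_and_residue:
  assumes "CARD('p::prime_card) = p" and "0 < m" and "m < p" and "0 < q" and "q < p"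
  shows "0 < Mexp TYPE('p) q m" and "Mexp TYPE('p) q m < p"
    and "(of_nat (Mexp TYPE('p) q m) :: 'p mod_ring) \<noteq> 0"
    and "(of_nat m :: 'p mod_ring) = - of_nat q * of_nat (Mexp TYPE('p) q m)"
proof -
  have m: "(of_nat m :: 'p mod_ring) \<noteq> 0" and q: "(of_nat q :: 'p mod_ring) \<noteq> 0"
    by (rule of_nat_neq_0_below_char; use assms in simp)+
  define x where "x = (- of_nat m * inverse (of_nat q) :: 'p mod_ring)"
  obtain t where t: "t < p" "x = of_nat t"
    using surj_of_nat_mod_ring assms(1) by blast
  have "x \<noteq> 0"
    using m q by (simp add: x_def)
  then have least: "0 < t \<and> of_nat t = x"
    using t(2) by (cases t) auto
  show "0 < Mexp TYPE('p) q m" and "(of_nat (Mexp TYPE('p) q m) :: 'p mod_ring) \<noteq> 0"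
    and "(of_nat m :: 'p mod_ring) = - of_nat q * of_nat (Mexp TYPE('p) q m)"
    using LeastI[of "\<lambda>M. 0 < M \<and> of_nat M = x" t, OF least] \<open>x \<noteq> 0\<close> q unfolding Mexp_def x_def
    by (auto simp: field_simps)
  show "Mexp TYPE('p) q m < p"
    using Least_le[of "\<lambda>M. 0 < M \<and> of_nat M = x" t, OF least] t(1) unfolding Mexp_def x_def by linarith
qed

theorem lemma3p1:
  fixes p q n l :: nat and m :: "nat \<Rightarrow> nat" and d :: "nat \<Rightarrow>\<^sub>0 nat"
    and TYPE_p :: "'p::prime_card itself"
  defines "M \<equiv> (\<lambda>i. Mexp TYPE('p) q (m i))"
  defines "r \<equiv> (\<Sum>i<n. M i) div p"
  defines "\<delta> \<equiv> (\<Sum>j<n. M j) - l * p"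
  defines "I \<equiv> (\<lambda>i. Icomp n M p l i :: 'p mod_ring mpoly)"
  assumes "CARD('p) = p" and "prime p" and "prime q"
    and "2 \<le> n" and "n < p" and "q < p"
    and "\<And>i. i < n \<Longrightarrow> 0 < m i \<and> m i < q"
    and "1 \<le> l" and "l \<le> r"
    and "Poly_Mapping.keys d \<subseteq> {..<n}"
  shows "((\<exists>i<n. Poly_Mapping.lookup (I i) d \<noteq> 0) \<longleftrightarrow>
          ((\<Sum>i<n. Poly_Mapping.lookup d i) = \<delta> \<and> (\<forall>i<n. Poly_Mapping.lookup d i \<le> M i)))
    \<and> (((\<Sum>i<n. Poly_Mapping.lookup d i) = \<delta> \<and> (\<forall>i<n. Poly_Mapping.lookup d i \<le> M i)) \<longrightarrow>
          (\<forall>i<n. Poly_Mapping.lookup (I i) d =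
             (-1) ^ \<delta> * (\<Prod>j<n. of_nat (M j choose Poly_Mapping.lookup d j))
               * (1 - of_nat (Poly_Mapping.lookup d i) / of_nat (M i))))
    \<and> (\<Sum>i<n. of_nat (m i) * Poly_Mapping.lookup (I i) d) = 0
    \<and> (\<Sum>i<n. of_nat (M i) * Poly_Mapping.lookup (I i) d) = 0"
proof -
  have char: "CHAR('p mod_ring) = p"
    using assms(5) by simp
  have M: "0 < M i" "M i < p" "(of_nat (M i) :: 'p mod_ring) \<noteq> 0"
    "(of_nat (m i) :: 'p mod_ring) = - of_nat q * of_nat (M i)" if "i < n" for i
    using Mexp_range_and_residue[OF assms(5), of "m i" q] assms(10) assms(11)[OF that] prime_gt_0_nat[OF assms(7)]
    unfolding M_def by auto
  have lp: "0 < l * p" "l * p \<le> (\<Sum>j<n. M j)"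
    using assms(6,12) prime_gt_0_nat
      le_trans[OF mult_le_mono1[OF assms(13)[unfolded r_def]] div_times_less_eq_dividend] by auto
  have sum_M: "(\<Sum>i<n. of_nat (M i) * Poly_Mapping.lookup (I i) d) = 0"
    using sum_of_nat_mult_lookup_Icomp[where 'a = "'p mod_ring", OF lp(1)] of_nat_CHAR[where 'a = "'p mod_ring"]
    unfolding I_def char by simp
  have "(\<Sum>i<n. of_nat (m i) * Poly_Mapping.lookup (I i) d) =
      - of_nat q * (\<Sum>i<n. of_nat (M i) * Poly_Mapping.lookup (I i) d)"
    unfolding sum_distrib_left by (intro sum.cong) (simp_all add: M(4))
  then show ?thesis
    using ex_lookup_Icomp_neq_0_iff[where 'a = "'p mod_ring", OF _ _ assms(14) lp]
      lookup_Icomp[OF _ assms(14) M(3) lp] M(1,2) char assms(6) sum_M unfolding I_def \<delta>_def by simp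
qed

end
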